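(* Let $\alpha\in(0,1)$, $\eta>0$, and run the generalized share algorithm with the projection mixing rule $\hat p_{t+1}\in\arg\min_{x\in\Delta_d^\alpha}\mathcal K(x,v_{t+1})$. Then for all $t\ge1$, all loss sequences in $[0,1]^d$, and all $q_t\in\Delta_d^\alpha$, \[ (\hat p_t-q_t)^\top\ell_t\le\frac1\eta\sum_{i=1}^d q_{i,t}\ln\frac{\hat p_{i,t+1}}{\hat p_{i,t}}+\frac\eta8 . \]
   Context: Let $d\ge1$ and $\Delta_d=\{q\in[0,1]^d:\sum_{i=1}^d q_i=1\}$. The generalized share algorithm with learning rate $\eta>0$ and mixing functions $\psi_t:[0,1]^{td}\to\Delta_d$ ($t\ge2$) works as follows: $\hat p_1=v_1=(1/d,\dots,1/d)$. At each round $t=1,2,\dots$ it predicts $\hat p_t=(\hat p_{1,t},\dots,\hat p_{d,t})\in\Delta_d$, observes a loss vector $\ell_t=(\ell_{1,t},\dots,\ell_{d,t})\in[0,1]^d$ (arbitrary), and suffers loss $\hat p_t^\top\ell_t$. It then forms the pre-weights $v_{j,t+1}=\hat p_{j,t}e^{-\eta\ell_{j,t}}/\sum_{i=1}^d\hat p_{i,t}e^{-\eta\ell_{i,t}}$ for $j=1,\dots,d$, sets $v_{t+1}=(v_{1,t+1},\dots,v_{d,t+1})$, and defines $\hat p_{t+1}=\psi_{t+1}(V_{t+1})$ where $V_{t+1}=[v_{i,s}]_{1\le i\le d,1\le s\le t+1}$ is the $d\times(t+1)$ matrix of all pre-weights so far. Here $\Delta_d^\alpha=[\alpha/d,1]^d\cap\Delta_d$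 and $\mathcal K(x,v)=\sum_{i=1}^d x_i\ln(x_i/v_i)$ is the Kullback–Leibler divergence. *)

theory Defs
  imports Complex_Main
begin

text \<open>Vectors in R^d are represented as functions nat \<Rightarrow> real, using coordinates 0..d-1.\<close>

definition simplex :: "nat \<Rightarrow> (nat \<Rightarrow> real) set" where
  "simplex d = {x. (\<forall>i<d. 0 \<le> x i \<and> x i \<le> 1) \<and> (\<Sum>i<d. x i) = 1}"

definition simplex_alpha :: "real \<Rightarrow> nat \<Rightarrow> (nat \<Rightarrow> real) set" where
  "simplex_alpha \<alpha> d = {x \<in> simplex d. \<forall>i<d. \<alpha> / real d \<le> x i \<and> x i \<le> 1}"

definition KL :: "nat \<Rightarrow> (nat \<Rightarrow> real) \<Rightarrow> (nat \<Rightarrow> real) \<Rightarrow> real" where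
  "KL d x v = (\<Sum>i<d. x i * ln (x i / v i))"

definition share_update :: "nat \<Rightarrow> real \<Rightarrow> (nat \<Rightarrow> real) \<Rightarrow> (nat \<Rightarrow> real) \<Rightarrow> (nat \<Rightarrow> real)" where
  "share_update d \<eta> p l = (\<lambda>j. p j * exp (- \<eta> * l j) / (\<Sum>i<d. p i * exp (- \<eta> * l i)))"

end

theory Submission
  imports Defs "HOL-Probability.Hoeffding"
begin

(* Fix a round t and write p = p_t, l = l_t, v = v_{t+1} (the exponential-weights
   update of p) and y = p_{t+1}, the KL-projection of v onto the truncated simplex Delta_d^alpha.
   Then  sum_i q_i ln(y_i/p_i) = sum_i q_i ln(y_i/v_i) + sum_i q_i ln(v_i/p_i),  and
   (1) the first sum is nonnegative: this is the generalised Pythagorean inequality for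
       KL-projections onto the convex set Delta_d^alpha, obtained from the first-order
       optimality condition of y together with Gibbs' inequality KL(y,v) >= 0;
   (2) since ln(v_i/p_i) = -eta l_i - ln Z with Z = sum_i p_i exp(-eta l_i), the second sum is
       -eta q.l - ln Z, and Hoeffding's lemma gives ln Z <= -eta p.l + eta^2/8.
   Adding (1) and (2) and dividing by eta yields the claim. *)

text \<open>The chord of the convex function \<open>x \<mapsto> exp (-\<eta> x)\<close> over [0,1], written in the form
  in which the library's Hoeffding lemma is stated.\<close>
lemma exp_chord_bound:
  fixes \<eta> x :: real
  assumes "0 \<le> x" "x \<le> 1"
  shows "exp (- \<eta> * x) \<le> exp (- \<eta>) * (1 + (1 - x) * (exp \<eta> - 1))"
proof -
  have "exp ((1 - (1 - x)) *\<^sub>R 0 + (1 - x) *\<^sub>R \<eta>) \<le> (1 - (1 - x)) * exp 0 + (1 - x) * exp \<eta>"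
    using assms by (intro convex_onD[OF exp_convex]) auto
  then have chord: "exp (\<eta> * (1 - x)) \<le> 1 + (1 - x) * (exp \<eta> - 1)"
    by (simp add: algebra_simps)
  have "exp (- \<eta> * x) = exp (- \<eta>) * exp (\<eta> * (1 - x))"
    by (subst exp_add[symmetric]) (simp add: algebra_simps)
  also have "\<dots> \<le> exp (- \<eta>) * (1 + (1 - x) * (exp \<eta> - 1))"
    using chord by (intro mult_left_mono) auto
  finally show ?thesis .
qed

text \<open>This is the source of the \<open>\<eta>/8\<close> term.\<close>
lemma ln_exp_mixture_le:
  fixes \<eta> :: real and p l :: "nat \<Rightarrow> real"
  assumes eta: "\<eta> \<ge> 0"
    and l_bounds: "\<And>i. i < d \<Longrightarrow> 0 \<le> l i \<and> l i \<le> 1"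
    and p_nonneg: "\<And>i. i < d \<Longrightarrow> 0 \<le> p i" and p_sum: "(\<Sum>i<d. p i) = 1"
  shows "ln (\<Sum>i<d. p i * exp (- \<eta> * l i)) \<le> - \<eta> * (\<Sum>i<d. p i * l i) + \<eta>\<^sup>2 / 8"
proof -
  define Z where "Z = (\<Sum>i<d. p i * exp (- \<eta> * l i))"
  define m where "m = (\<Sum>i<d. p i * (1 - l i))"
  have m_nonneg: "m \<ge> 0" unfolding m_def using p_nonneg l_bounds by (intro sum_nonneg) auto
  have m_eq: "m = 1 - (\<Sum>i<d. p i * l i)"
    unfolding m_def by (simp add: algebra_simps sum_subtractf p_sum)
  have "Z \<le> (\<Sum>i<d. p i * (exp (- \<eta>) * (1 + (1 - l i) * (exp \<eta> - 1))))"
    unfolding Z_def using exp_chord_bound l_bounds p_nonneg by (intro sum_mono mult_left_mono) auto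
  also have "\<dots> = (\<Sum>i<d. exp (- \<eta>) * p i + exp (- \<eta>) * (exp \<eta> - 1) * (p i * (1 - l i)))"
    by (rule sum.cong) (simp_all add: algebra_simps)
  also have "\<dots> = exp (- \<eta>) * (\<Sum>i<d. p i) + exp (- \<eta>) * (exp \<eta> - 1) * m"
    by (simp add: m_def sum.distrib sum_distrib_left)
  finally have Z_upper: "Z \<le> exp (- \<eta>) * (1 + m * (exp \<eta> - 1))"
    by (simp add: p_sum algebra_simps)
  have "exp (- \<eta>) = (\<Sum>i<d. p i * exp (- \<eta>))"
    by (simp add: sum_distrib_right[symmetric] p_sum)
  also have "\<dots> \<le> Z"
    unfolding Z_def using p_nonneg l_bounds eta
    by (intro sum_mono mult_left_mono) (auto simp: mult_left_le)
  finally have Z_pos: "0 < Z" by (meson exp_gt_zero less_le_trans)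
  have "0 < 1 + m * (exp \<eta> - 1)"
    using m_nonneg eta by (smt (verit) mult_nonneg_nonneg one_le_exp_iff)
  then have "ln Z \<le> ln (exp (- \<eta>) * (1 + m * (exp \<eta> - 1)))"
    using Z_upper Z_pos by simp
  also have "\<dots> = - \<eta> + ln (1 + m * (exp \<eta> - 1))"
    using \<open>0 < 1 + m * (exp \<eta> - 1)\<close> by (simp add: ln_mult)
  also have "\<dots> \<le> - \<eta> + (\<eta> * m + \<eta>\<^sup>2 / 8)"
    using Hoeffdings_lemma_aux[of \<eta> m] eta m_nonneg by (simp add: mult.commute)
  finally show ?thesis by (simp add: Z_def m_eq algebra_simps)
qed

lemma KL_nonneg:
  fixes y v :: "nat \<Rightarrow> real"
  assumes "\<And>i. i < d \<Longrightarrow> 0 < y i" "\<And>i. i < d \<Longrightarrow> 0 < v i"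
    and "(\<Sum>i<d. y i) = 1" "(\<Sum>i<d. v i) = 1"
  shows "0 \<le> KL d y v"
proof -
  have "(\<Sum>i<d. y i - v i) \<le> (\<Sum>i<d. y i * ln (y i / v i))"
  proof (rule sum_mono)
    fix i assume "i \<in> {..<d}"
    then have pos: "0 < y i" "0 < v i" using assms by auto
    have "ln (v i / y i) \<le> v i / y i - 1" using pos by (intro ln_le_minus_one) auto
    moreover have "ln (y i / v i) = - ln (v i / y i)" using pos by (simp add: ln_div)
    ultimately have "y i * (1 - v i / y i) \<le> y i * ln (y i / v i)"
      using pos by (intro mult_left_mono) auto
    then show "y i - v i \<le> y i * ln (y i / v i)" using pos by (simp add: algebra_simps)
  qed
  then show ?thesis using assms by (simp add: KL_def sum_subtractf)
qed

lemma xlnx_tangent_bound: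
  fixes x y v :: real
  assumes "0 < x" "0 < y" "0 < v"
  shows "x * ln (x / v) - y * ln (y / v) \<le> (x - y) * (ln (x / v) + 1)"
proof -
  have "y * ln (x / y) \<le> y * (x / y - 1)"
    using assms by (intro mult_left_mono ln_le_minus_one) auto
  also have "y * (x / y - 1) = x - y" using assms by (simp add: field_simps)
  finally have log_bound: "y * ln (x / y) \<le> x - y" .
  have log_split: "ln (x / v) = ln x - ln v" "ln (y / v) = ln y - ln v" "ln (x / y) = ln x - ln y"
    using assms by (auto simp: ln_div)
  show ?thesis using log_bound unfolding log_split by (simp add: algebra_simps)
qed

lemma simplex_alpha_sum: "x \<in> simplex_alpha \<alpha> d \<Longrightarrow> (\<Sum>i<d. x i) = 1"
  by (simp add: simplex_alpha_def Defs.simplex_def)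

lemma simplex_alpha_pos:
  assumes "0 < \<alpha>" "d \<ge> 1" "x \<in> simplex_alpha \<alpha> d" "i < d"
  shows "0 < x i"
proof -
  have "\<alpha> / real d \<le> x i" using assms(3,4) by (simp add: simplex_alpha_def)
  moreover have "0 < \<alpha> / real d" using assms(1,2) by simp
  ultimately show ?thesis by linarith
qed

lemma simplex_alpha_convex:
  assumes x: "x \<in> simplex_alpha \<alpha> d" and y: "y \<in> simplex_alpha \<alpha> d"
    and u: "0 \<le> u" "u \<le> 1"
  shows "(\<lambda>i. (1 - u) * x i + u * y i) \<in> simplex_alpha \<alpha> d"
proof -
  have between: "a \<le> (1 - u) * x i + u * y i \<and> (1 - u) * x i + u * y i \<le> b"
    if "a \<le> x i" "x i \<le> b" "a \<le> y i" "y i \<le> b" for a b :: real and i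
  proof -
    have "(1 - u) * a + u * a \<le> (1 - u) * x i + u * y i"
      "(1 - u) * x i + u * y i \<le> (1 - u) * b + u * b"
      using that u by (intro add_mono mult_left_mono; simp)+
    then show ?thesis by (simp add: algebra_simps)
  qed
  have "(\<Sum>i<d. (1 - u) * x i + u * y i) = 1"
    using simplex_alpha_sum[OF x] simplex_alpha_sum[OF y]
    by (simp add: sum.distrib flip: sum_distrib_left)
  moreover have "0 \<le> (1 - u) * x i + u * y i \<and> (1 - u) * x i + u * y i \<le> 1"
    "\<alpha> / real d \<le> (1 - u) * x i + u * y i" if "i < d" for i
    using between[of 0 i 1] between[of "\<alpha> / real d" i 1] x y that
    by (auto simp: simplex_alpha_def Defs.simplex_def)
  ultimately show ?thesis by (simp add: simplex_alpha_def Defs.simplex_def)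
qed

text \<open>Along the segment
  \<open>x u = y + u (q - y)\<close> the tangent bound turns minimality of \<open>y\<close> into \<open>F u \<ge> 0\<close> for
  \<open>u \<in> (0,1]\<close>, where \<open>F u = \<Sum> (q\<^sub>i - y\<^sub>i) ln (x u i / v\<^sub>i)\<close>; letting \<open>u \<rightarrow> 0\<close> gives \<open>F 0 \<ge> 0\<close>.\<close>
lemma KL_projection_first_order:
  fixes y q v :: "nat \<Rightarrow> real"
  assumes d: "d \<ge> 1" and \<alpha>: "0 < \<alpha>"
    and y: "is_arg_min (\<lambda>x. KL d x v) (\<lambda>x. x \<in> simplex_alpha \<alpha> d) y"
    and q: "q \<in> simplex_alpha \<alpha> d"
    and v_pos: "\<And>i. i < d \<Longrightarrow> 0 < v i"
  shows "0 \<le> (\<Sum>i<d. (q i - y i) * ln (y i / v i))"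
proof -
  have y_in: "y \<in> simplex_alpha \<alpha> d" using y by (simp add: is_arg_min_def)
  have y_min: "KL d y v \<le> KL d x v" if "x \<in> simplex_alpha \<alpha> d" for x
    using y that by (auto simp: is_arg_min_def not_less)
  have y_pos: "\<And>i. i < d \<Longrightarrow> 0 < y i" using simplex_alpha_pos[OF \<alpha> d y_in] .
  define x where "x = (\<lambda>u i. (1 - u) * y i + u * q i)"
  define F where "F = (\<lambda>u. \<Sum>i<d. (q i - y i) * ln (x u i / v i))"
  have F_nonneg: "0 \<le> F u" if u: "0 < u" "u \<le> 1" for u
  proof -
    have x_in: "x u \<in> simplex_alpha \<alpha> d"
      unfolding x_def using simplex_alpha_convex[OF y_in q] u by simp
    have "0 \<le> KL d (x u) v - KL d y v" using y_min[OF x_in] by simp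
    also have "\<dots> \<le> (\<Sum>i<d. (x u i - y i) * (ln (x u i / v i) + 1))"
      unfolding KL_def sum_subtractf[symmetric]
      using xlnx_tangent_bound simplex_alpha_pos[OF \<alpha> d x_in] y_pos v_pos
      by (intro sum_mono) auto
    also have "\<dots> = (\<Sum>i<d. u * ((q i - y i) * ln (x u i / v i)) + u * (q i - y i))"
      by (rule sum.cong) (simp_all add: x_def algebra_simps)
    also have "\<dots> = u * F u + u * (\<Sum>i<d. q i - y i)"
      by (simp add: F_def sum.distrib sum_distrib_left)
    also have "(\<Sum>i<d. q i - y i) = 0"
      by (simp add: sum_subtractf simplex_alpha_sum[OF q] simplex_alpha_sum[OF y_in])
    finally show ?thesis using u by (simp add: zero_le_mult_iff)
  qed
  have "isCont F 0"
    unfolding F_def x_def using y_pos v_pos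
    by (intro continuous_intros) (auto, (metis less_irrefl)+)
  then have "(F \<longlongrightarrow> F 0) (at_right 0)"
    unfolding isCont_def by (rule tendsto_within_subset) auto
  moreover have "eventually (\<lambda>u. 0 \<le> F u) (at_right 0)"
    using eventually_at_right_real[of "0::real" 1] F_nonneg
    by (auto elim!: eventually_mono)
  ultimately have "0 \<le> F 0" by (rule tendsto_lowerbound) simp
  then show ?thesis by (simp add: F_def x_def)
qed

text \<open>Generalised Pythagorean inequality for the KL-projection \<open>y\<close> of a probability vector \<open>v\<close>:
  \<open>\<Sum> q\<^sub>i ln (y\<^sub>i/v\<^sub>i) = \<Sum> (q\<^sub>i - y\<^sub>i) ln (y\<^sub>i/v\<^sub>i) + KL(y,v) \<ge> 0\<close>, i.e. \<open>KL(q,v) \<ge> KL(q,y)\<close>.\<close>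
lemma KL_projection_pythagoras:
  fixes y q v :: "nat \<Rightarrow> real"
  assumes d: "d \<ge> 1" and \<alpha>: "0 < \<alpha>"
    and y: "is_arg_min (\<lambda>x. KL d x v) (\<lambda>x. x \<in> simplex_alpha \<alpha> d) y"
    and q: "q \<in> simplex_alpha \<alpha> d"
    and v_pos: "\<And>i. i < d \<Longrightarrow> 0 < v i" and v_sum: "(\<Sum>i<d. v i) = 1"
  shows "0 \<le> (\<Sum>i<d. q i * ln (y i / v i))"
proof -
  have y_in: "y \<in> simplex_alpha \<alpha> d" using y by (simp add: is_arg_min_def)
  have "0 \<le> KL d y v"
    using simplex_alpha_pos[OF \<alpha> d y_in] v_pos simplex_alpha_sum[OF y_in] v_sum
    by (rule KL_nonneg)
  moreover have "(\<Sum>i<d. q i * ln (y i / v i))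
      = (\<Sum>i<d. (q i - y i) * ln (y i / v i)) + KL d y v"
    by (simp add: KL_def algebra_simps sum.distrib[symmetric])
  ultimately show ?thesis using KL_projection_first_order[OF d \<alpha> y q v_pos] by linarith
qed

lemma share_update_pos:
  assumes "d \<ge> 1" "\<And>i. i < d \<Longrightarrow> 0 < p i" "i < d"
  shows "0 < share_update d \<eta> p l i"
proof -
  have "0 < (\<Sum>i<d. p i * exp (- \<eta> * l i))"
    using assms by (intro sum_pos) (auto simp: lessThan_empty_iff)
  then show ?thesis using assms by (simp add: share_update_def)
qed

lemma share_update_sum:
  assumes "d \<ge> 1" "\<And>i. i < d \<Longrightarrow> 0 < p i"
  shows "(\<Sum>i<d. share_update d \<eta> p l i) = 1"
proof -
  have "0 < (\<Sum>i<d. p i * exp (- \<eta> * l i))"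
    using assms by (intro sum_pos) (auto simp: lessThan_empty_iff)
  then show ?thesis by (simp add: share_update_def sum_divide_distrib[symmetric])
qed

lemma share_update_log_ratio:
  assumes "d \<ge> 1" "\<And>i. i < d \<Longrightarrow> 0 < p i" "i < d"
  shows "ln (share_update d \<eta> p l i / p i) = - \<eta> * l i - ln (\<Sum>j<d. p j * exp (- \<eta> * l j))"
proof -
  define Z where "Z = (\<Sum>j<d. p j * exp (- \<eta> * l j))"
  have "0 < Z" unfolding Z_def using assms by (intro sum_pos) (auto simp: lessThan_empty_iff)
  moreover have "share_update d \<eta> p l i / p i = exp (- \<eta> * l i) / Z"
    using assms(2)[OF assms(3)] by (simp add: share_update_def Z_def)
  ultimately show ?thesis by (simp add: Z_def ln_div)
qed

lemma share_projection_one_round: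
  fixes \<eta> :: real and p l y q :: "nat \<Rightarrow> real"
  assumes d: "d \<ge> 1" and \<alpha>: "0 < \<alpha>" and eta: "\<eta> > 0"
    and l_bounds: "\<And>i. i < d \<Longrightarrow> 0 \<le> l i \<and> l i \<le> 1"
    and p_pos: "\<And>i. i < d \<Longrightarrow> 0 < p i" and p_sum: "(\<Sum>i<d. p i) = 1"
    and y: "is_arg_min (\<lambda>x. KL d x (share_update d \<eta> p l)) (\<lambda>x. x \<in> simplex_alpha \<alpha> d) y"
    and q: "q \<in> simplex_alpha \<alpha> d"
  shows "(\<Sum>i<d. (p i - q i) * l i) \<le> 1 / \<eta> * (\<Sum>i<d. q i * ln (y i / p i)) + \<eta> / 8"
proof -
  define v where "v = share_update d \<eta> p l"
  define Z where "Z = (\<Sum>i<d. p i * exp (- \<eta> * l i))"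
  have v_pos: "\<And>i. i < d \<Longrightarrow> 0 < v i"
    unfolding v_def using share_update_pos[OF d p_pos] .
  have y_pos: "\<And>i. i < d \<Longrightarrow> 0 < y i"
    using simplex_alpha_pos[OF \<alpha> d] y by (simp add: is_arg_min_def)
  have projection: "0 \<le> (\<Sum>i<d. q i * ln (y i / v i))"
    using KL_projection_pythagoras[OF d \<alpha> y[folded v_def] q v_pos]
      share_update_sum[OF d p_pos] by (simp add: v_def)
  have log_ratio: "ln (v i / p i) = - \<eta> * l i - ln Z" if "i < d" for i
    unfolding v_def Z_def using share_update_log_ratio[OF d p_pos that] .
  have "(\<Sum>i<d. q i * ln (v i / p i)) = (\<Sum>i<d. q i * (- \<eta> * l i - ln Z))"
    using log_ratio by (intro sum.cong) auto
  also have "\<dots> = - \<eta> * (\<Sum>i<d. q i * l i) - ln Z * (\<Sum>i<d. q i)"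
    by (simp add: algebra_simps sum_subtractf sum_distrib_left sum_distrib_right)
  finally have update: "(\<Sum>i<d. q i * ln (v i / p i)) = - \<eta> * (\<Sum>i<d. q i * l i) - ln Z"
    by (simp add: simplex_alpha_sum[OF q])
  have hoeffding: "ln Z \<le> - \<eta> * (\<Sum>i<d. p i * l i) + \<eta>\<^sup>2 / 8"
    unfolding Z_def using eta l_bounds p_pos p_sum
    by (intro ln_exp_mixture_le) (auto simp: less_imp_le)
  have "(\<Sum>i<d. q i * ln (y i / p i))
      = (\<Sum>i<d. q i * ln (y i / v i) + q i * ln (v i / p i))"
  proof (rule sum.cong)
    fix i assume "i \<in> {..<d}"
    then show "q i * ln (y i / p i) = q i * ln (y i / v i) + q i * ln (v i / p i)"
      using y_pos[of i] v_pos[of i] p_pos[of i] by (simp add: ln_div algebra_simps)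
  qed simp
  then have log_split: "(\<Sum>i<d. q i * ln (y i / p i))
      = (\<Sum>i<d. q i * ln (y i / v i)) + (\<Sum>i<d. q i * ln (v i / p i))"
    by (simp add: sum.distrib)
  have "\<eta> * (\<Sum>i<d. (p i - q i) * l i) = \<eta> * (\<Sum>i<d. p i * l i) - \<eta> * (\<Sum>i<d. q i * l i)"
    by (simp add: algebra_simps sum_subtractf)
  then have "\<eta> * (\<Sum>i<d. (p i - q i) * l i) \<le> (\<Sum>i<d. q i * ln (y i / p i)) + \<eta>\<^sup>2 / 8"
    using log_split projection update hoeffding by linarith
  then show ?thesis
    using eta by (simp add: field_simps power2_eq_square)
qed

text \<open>Every prediction of the algorithm lies in \<open>\<Delta>\<^sub>d\<^sup>\<alpha>\<close>: the uniform start does since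
  \<open>\<alpha> < 1\<close>, and every later one is a minimiser over \<open>\<Delta>\<^sub>d\<^sup>\<alpha>\<close>.\<close>
lemma share_prediction_in_simplex_alpha:
  fixes p :: "nat \<Rightarrow> nat \<Rightarrow> real" and s :: nat
  assumes d: "d \<ge> 1" and \<alpha>: "\<alpha> < 1"
    and start: "p 1 = (\<lambda>i. 1 / real d)"
    and step: "\<And>s. s \<ge> 1 \<Longrightarrow> is_arg_min (f s) (\<lambda>x. x \<in> simplex_alpha \<alpha> d) (p (s + 1))"
    and s: "s \<ge> 1"
  shows "p s \<in> simplex_alpha \<alpha> d"
proof (cases "s = 1")
  case True
  have "\<alpha> / real d \<le> 1 / real d" using \<alpha> d by (simp add: divide_right_mono)
  then show ?thesis using True start d by (auto simp: simplex_alpha_def Defs.simplex_def)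
next
  case False
  then have "p s = p ((s - 1) + 1)" "s - 1 \<ge> 1" using s by auto
  then show ?thesis using step[of "s - 1"] by (simp add: is_arg_min_def)
qed

theorem mainTheorem3:
  fixes d :: nat and \<alpha> \<eta> :: real
    and p :: "nat \<Rightarrow> nat \<Rightarrow> real"   (* p t = predicted weight vector at round t *)
    and l :: "nat \<Rightarrow> nat \<Rightarrow> real"   (* l t = loss vector at round t *)
    and q :: "nat \<Rightarrow> real" and t :: nat
  assumes "d \<ge> 1"
    and "0 < \<alpha>" and "\<alpha> < 1"
    and "\<eta> > 0"
    and "\<And>s i. s \<ge> 1 \<Longrightarrow> i < d \<Longrightarrow> 0 \<le> l s i \<and> l s i \<le> 1"
    and "p 1 = (\<lambda>i. 1 / real d)"
    and "\<And>s. s \<ge> 1 \<Longrightarrow>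
           is_arg_min (\<lambda>x. KL d x (share_update d \<eta> (p s) (l s)))
                      (\<lambda>x. x \<in> simplex_alpha \<alpha> d) (p (s + 1))"
    and "t \<ge> 1"
    and "q \<in> simplex_alpha \<alpha> d"
  shows "(\<Sum>i<d. (p t i - q i) * l t i)
           \<le> 1 / \<eta> * (\<Sum>i<d. q i * ln (p (t + 1) i / p t i)) + \<eta> / 8"
proof -
  have p_in: "p t \<in> simplex_alpha \<alpha> d"
    using share_prediction_in_simplex_alpha[OF assms(1,3,6,7,8)] .
  show ?thesis
  proof (rule share_projection_one_round[OF assms(1,2,4)])
    show "\<And>i. i < d \<Longrightarrow> 0 \<le> l t i \<and> l t i \<le> 1" using assms(5,8) by blast
    show "\<And>i. i < d \<Longrightarrow> 0 < p t i" using simplex_alpha_pos[OF assms(2,1) p_in] .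
    show "(\<Sum>i<d. p t i) = 1" using simplex_alpha_sum[OF p_in] .
  qed (use assms(7,8,9) in auto)
qed

end
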